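(* Let $m\ge1$, let $C\in\mathbb{R}^{m\times 3}$, and let $A,B^t\in\mathcal{Q}_0(C)$ (so $A\in\mathbb{R}^{m\times3}$, $B\in\mathbb{R}^{3\times m}$). Suppose the DSR graph $G_{A,B}$ satisfies: (i) every e-cycle of length $4$ is an s-cycle; and (ii) every o-cycle of length $6$ is an s-cycle. Then no nonreal eigenvalue of $AB$ lies in the open left half-plane $\mathbb{C}_-$.
   Context: For $M\in\mathbb{R}^{n\times m}$, $\mathcal{Q}(M)$ is the set of matrices with the same sign pattern as $M$ (entrywise signs in $\{-,0,+\}$ equal), and $\mathcal{Q}_0(M)$ is its closure. DSR graphs: for $A\in\mathbb{R}^{n\times m}$, $B\in\mathbb{R}^{m\times n}$, $G_{A,B}$ is the signed, labelled bipartite digraph with S-vertices $S_1,\dots,S_n$ and R-vertices $R_1,\dots,R_m$, having an arc $R_j\to S_i$ of sign $\mathrm{sign}(A_{ij})$ iff $A_{ij}\ne0$, and an arc $S_i\to R_j$ of sign $\mathrm{sign}(B_{ji})$ iff $B_{ji}\neq 0$. A pair of antiparallel arcs between $S_i$ and $R_j$ with the same sign is regarded as a single undirected edge (traversable in either direction). An edge arising from $A_{ij}\ne0$ (R-to-S or undirected) has label $|A_{ij}|$; an edge with only S-to-R orientation has label $\infty$. Walks traverse edges consistently with their orientation; the length of a walk is its number of edges (with multiplicity), its sign is the product of its edge signs. A cycle is a nonempty closed walk repeating no vertex except first$=$last. The parity of a cycle $W$ (of even length) is $P(W)=(-1)^{|W|/2}\mathrm{sign}(W)$; it is an e-cycle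 if $P=1$ and an o-cycle if $P=-1$. A cycle $(e_1,\dots,e_{2r})$ is an s-cycle if all its labels are finite and $\prod_{i=1}^r l(e_{2i-1})=\prod_{i=1}^r l(e_{2i})$. *)

theory Defs
  imports "Jordan_Normal_Form.Char_Poly"
begin

definition in_Q0 :: "real mat \<Rightarrow> real mat \<Rightarrow> bool" where
  "in_Q0 C M \<longleftrightarrow> dim_row M = dim_row C \<and> dim_col M = dim_col C \<and>
     (\<forall>i < dim_row C. \<forall>j < dim_col C. M $$ (i,j) = 0 \<or> sgn (M $$ (i,j)) = sgn (C $$ (i,j)))"

datatype dsr_vertex = SV nat | RV nat

definition dsr_vertex_ok :: "real mat \<Rightarrow> dsr_vertex \<Rightarrow> bool" where
  "dsr_vertex_ok A v = (case v of SV i \<Rightarrow> i < dim_row A | RV j \<Rightarrow> j < dim_col A)"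

(* u -> v can be traversed in G_{A,B}. Between any ordered pair of vertices there is at
   most one traversable edge (arc or undirected edge), so walks are determined by
   their vertex sequence. *)
definition dsr_step :: "real mat \<Rightarrow> real mat \<Rightarrow> dsr_vertex \<Rightarrow> dsr_vertex \<Rightarrow> bool" where
  "dsr_step A B u v = (dsr_vertex_ok A u \<and> dsr_vertex_ok A v \<and>
     (case (u, v) of
        (SV i, RV j) \<Rightarrow> B $$ (j, i) \<noteq> 0
      | (RV j, SV i) \<Rightarrow> A $$ (i, j) \<noteq> 0
      | _ \<Rightarrow> False))"

definition dsr_step_sign :: "real mat \<Rightarrow> real mat \<Rightarrow> dsr_vertex \<Rightarrow> dsr_vertex \<Rightarrow> real" where
  "dsr_step_sign A B u v =
     (case (u, v) of
        (SV i, RV j) \<Rightarrow> sgn (B $$ (j, i))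
      | (RV j, SV i) \<Rightarrow> sgn (A $$ (i, j))
      | _ \<Rightarrow> 0)"

(* label of the edge used when traversing u -> v; None stands for the label \<infinity>.
   S->R traversal uses the undirected edge (label |A_ij|) iff A_ij and B_ji are nonzero
   with the same sign; otherwise it uses an S-to-R arc only (label \<infinity>). *)
definition dsr_step_label :: "real mat \<Rightarrow> real mat \<Rightarrow> dsr_vertex \<Rightarrow> dsr_vertex \<Rightarrow> real option" where
  "dsr_step_label A B u v =
     (case (u, v) of
        (SV i, RV j) \<Rightarrow> (if A $$ (i, j) \<noteq> 0 \<and> sgn (A $$ (i, j)) = sgn (B $$ (j, i))
                          then Some \<bar>A $$ (i, j)\<bar> else None)
      | (RV j, SV i) \<Rightarrow> Some \<bar>A $$ (i, j)\<bar>
      | _ \<Rightarrow> None)"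

definition dsr_cycle :: "real mat \<Rightarrow> real mat \<Rightarrow> dsr_vertex list \<Rightarrow> bool" where
  "dsr_cycle A B vs \<longleftrightarrow> vs \<noteq> [] \<and> distinct vs \<and>
     (\<forall>k < length vs. dsr_step A B (vs ! k) (vs ! ((k + 1) mod length vs)))"

definition cyc_edge_sign :: "real mat \<Rightarrow> real mat \<Rightarrow> dsr_vertex list \<Rightarrow> nat \<Rightarrow> real" where
  "cyc_edge_sign A B vs k = dsr_step_sign A B (vs ! k) (vs ! ((k + 1) mod length vs))"

definition cyc_edge_label :: "real mat \<Rightarrow> real mat \<Rightarrow> dsr_vertex list \<Rightarrow> nat \<Rightarrow> real option" where
  "cyc_edge_label A B vs k = dsr_step_label A B (vs ! k) (vs ! ((k + 1) mod length vs))"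

definition cycle_sign :: "real mat \<Rightarrow> real mat \<Rightarrow> dsr_vertex list \<Rightarrow> real" where
  "cycle_sign A B vs = (\<Prod>k < length vs. cyc_edge_sign A B vs k)"

definition cycle_parity :: "real mat \<Rightarrow> real mat \<Rightarrow> dsr_vertex list \<Rightarrow> real" where
  "cycle_parity A B vs = (-1) ^ (length vs div 2) * cycle_sign A B vs"

definition e_cycle :: "real mat \<Rightarrow> real mat \<Rightarrow> dsr_vertex list \<Rightarrow> bool" where
  "e_cycle A B vs \<longleftrightarrow> dsr_cycle A B vs \<and> cycle_parity A B vs = 1"

definition o_cycle :: "real mat \<Rightarrow> real mat \<Rightarrow> dsr_vertex list \<Rightarrow> bool" where
  "o_cycle A B vs \<longleftrightarrow> dsr_cycle A B vs \<and> cycle_parity A B vs = -1"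

(* s-cycle (e_1,...,e_{2r}): all labels finite and prod_{i=1}^r l(e_{2i-1}) = prod_{i=1}^r l(e_{2i}).
   Edge e_{k+1} has index k here. *)
definition s_cycle :: "real mat \<Rightarrow> real mat \<Rightarrow> dsr_vertex list \<Rightarrow> bool" where
  "s_cycle A B vs \<longleftrightarrow> dsr_cycle A B vs \<and> even (length vs) \<and>
     (\<forall>k < length vs. cyc_edge_label A B vs k \<noteq> None) \<and>
     (\<Prod>i < length vs div 2. the (cyc_edge_label A B vs (2 * i))) =
     (\<Prod>i < length vs div 2. the (cyc_edge_label A B vs (2 * i + 1)))"

end

theory Submission
  imports Defs
begin

(* The nonzero eigenvalues of AB are those of the 3 x 3 matrix N = BA, the sum of the rank-one
   matrices b_i a_i^T built from the columns of B and the rows of A. A nonreal root z of the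
   characteristic polynomial z^3 - c1 z^2 + c2 z - c3 of N satisfies
   c1 c2 - c3 = 2 Re z ((c1 - Re z)^2 + (Im z)^2), so it suffices to show c1 c2 - c3 >= 0.
   This cubic form is the diagonal of a symmetric trilinear form, so it splits into the values of
   that form at triples of rank-one terms. Each value is a sum of products which are nonnegative
   by the sign compatibility of A and B^t, and of cross terms given by 4- and 6-cycles of the DSR
   graph: a cross term of the wrong sign comes from an e-cycle of length 4 or an o-cycle of
   length 6, which is then an s-cycle, and the s-cycle condition makes it cancel. *)

(* 3 x 3 matrices are handled as entry functions, so that BA is literally a pointwise sum of
   rank-one terms and the forms below are visibly multilinear. *)

type_synonym 'a entry_fun = "nat \<Rightarrow> nat \<Rightarrow> 'a"

definition tr3 :: "'a::comm_ring_1 entry_fun \<Rightarrow> 'a" where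
  "tr3 N = N 0 0 + N 1 1 + N 2 2"

definition sigma2 :: "'a::comm_ring_1 entry_fun \<Rightarrow> 'a" where
  "sigma2 N = N 0 0 * N 1 1 - N 0 1 * N 1 0 + N 0 0 * N 2 2 - N 0 2 * N 2 0
            + N 1 1 * N 2 2 - N 1 2 * N 2 1"

definition row_det3 :: "'a::comm_ring_1 entry_fun \<Rightarrow> 'a entry_fun \<Rightarrow> 'a entry_fun \<Rightarrow> 'a" where
  "row_det3 R S T = R 0 0 * S 1 1 * T 2 2 - R 0 0 * S 1 2 * T 2 1 - R 0 1 * S 1 0 * T 2 2
                  + R 0 1 * S 1 2 * T 2 0 + R 0 2 * S 1 0 * T 2 1 - R 0 2 * S 1 1 * T 2 0"

lemma less_3_cases: "(j::nat) < 3 \<longleftrightarrow> j = 0 \<or> j = 1 \<or> j = 2"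
  by arith

lemma mat_mult_vec_index_3:
  fixes N :: "'a::comm_ring_1 entry_fun"
  assumes "w \<in> carrier_vec 3" "j < 3"
  shows "(mat 3 3 (\<lambda>(j, k). N j k) *\<^sub>v w) $ j = N j 0 * w $ 0 + N j 1 * w $ 1 + N j 2 * w $ 2"
  using assms by (simp add: scalar_prod_def atLeast0LessThan eval_nat_numeral lessThan_Suc add_ac)

lemma eigenvalue_3x3_char_eq:
  fixes N :: "'a::idom entry_fun"
  assumes "eigenvalue (mat 3 3 (\<lambda>(j, k). N j k)) z"
  shows "z ^ 3 - tr3 N * z\<^sup>2 + sigma2 N * z - row_det3 N N N = 0"
proof -
  obtain w where w: "w \<in> carrier_vec 3" "w \<noteq> 0\<^sub>v 3"
    and Nw: "mat 3 3 (\<lambda>(j, k). N j k) *\<^sub>v w = z \<cdot>\<^sub>v w"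
    using assms unfolding eigenvalue_def eigenvector_def by auto
  \<comment> \<open>\<open>K j\<close> is entry \<open>j\<close> of \<open>(N - z I) w\<close>, and \<open>d\<close> below is \<open>det (N - z I)\<close>; multiplying
      \<open>K\<close> by the adjugate of \<open>N - z I\<close> gives \<open>d w = 0\<close>.\<close>
  define K where "K j = (N j 0 - (if j = 0 then z else 0)) * w $ 0
    + (N j 1 - (if j = 1 then z else 0)) * w $ 1 + (N j 2 - (if j = 2 then z else 0)) * w $ 2" for j
  have K: "K j = 0" if j: "j < 3" for j
  proof -
    have "(mat 3 3 (\<lambda>(j, k). N j k) *\<^sub>v w) $ j = z * w $ j"
      using Nw j w(1) by simp
    then show ?thesis
      using j unfolding mat_mult_vec_index_3[OF w(1) j] K_def
      by (auto simp: less_3_cases algebra_simps)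
  qed
  define d where "d = - (z ^ 3 - tr3 N * z\<^sup>2 + sigma2 N * z - row_det3 N N N)"
  have "d * w $ 0 = ((N 1 1 - z) * (N 2 2 - z) - N 1 2 * N 2 1) * K 0
      - (N 0 1 * (N 2 2 - z) - N 0 2 * N 2 1) * K 1 + (N 0 1 * N 1 2 - N 0 2 * (N 1 1 - z)) * K 2"
    "d * w $ 1 = - (N 1 0 * (N 2 2 - z) - N 1 2 * N 2 0) * K 0
      + ((N 0 0 - z) * (N 2 2 - z) - N 0 2 * N 2 0) * K 1 - ((N 0 0 - z) * N 1 2 - N 0 2 * N 1 0) * K 2"
    "d * w $ 2 = (N 1 0 * N 2 1 - (N 1 1 - z) * N 2 0) * K 0
      - ((N 0 0 - z) * N 2 1 - N 0 1 * N 2 0) * K 1 + ((N 0 0 - z) * (N 1 1 - z) - N 0 1 * N 1 0) * K 2"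
    unfolding d_def K_def tr3_def sigma2_def row_det3_def
    by (simp_all add: algebra_simps power2_eq_square power3_eq_cube)
  then have "d * w $ j = 0" if "j < 3" for j
    using K that by (auto simp: less_3_cases)
  moreover obtain j where "j < 3" "w $ j \<noteq> 0"
    using w by (metis eq_vecI carrier_vecD index_zero_vec)
  ultimately have "d = 0"
    by auto
  then show ?thesis
    unfolding d_def by simp
qed

lemma cubic_nonreal_root_Re:
  fixes c1 c2 c3 :: real and z :: complex
  assumes root: "z ^ 3 - c1 * z\<^sup>2 + c2 * z - c3 = 0" and "Im z \<noteq> 0"
  shows "c1 * c2 - c3 = 2 * Re z * ((c1 - Re z)\<^sup>2 + (Im z)\<^sup>2)"
proof -
  obtain a b where z: "z = Complex a b" and "b \<noteq> 0"
    using assms(2) complex.exhaust_sel by blast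
  have re: "a ^ 3 - 3 * a * b\<^sup>2 - c1 * (a\<^sup>2 - b\<^sup>2) + c2 * a - c3 = 0"
    using arg_cong[OF root, of Re] unfolding z
    by (simp add: power3_eq_cube power2_eq_square algebra_simps)
  have "b * (3 * a\<^sup>2 - b\<^sup>2 - 2 * c1 * a + c2) = 0"
    using arg_cong[OF root, of Im] unfolding z
    by (simp add: power3_eq_cube power2_eq_square algebra_simps)
  with \<open>b \<noteq> 0\<close> have im: "3 * a\<^sup>2 - b\<^sup>2 - 2 * c1 * a + c2 = 0"
    by simp
  have "c1 * c2 - c3 - 2 * a * ((c1 - a)\<^sup>2 + b\<^sup>2)
      = (a ^ 3 - 3 * a * b\<^sup>2 - c1 * (a\<^sup>2 - b\<^sup>2) + c2 * a - c3) + (c1 - a) * (3 * a\<^sup>2 - b\<^sup>2 - 2 * c1 * a + c2)"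
    by (simp add: algebra_simps power2_eq_square power3_eq_cube)
  with re im show ?thesis
    unfolding z by simp
qed

lemma eigenvalue_mult_swap:
  fixes A B :: "'a::field mat"
  assumes A: "A \<in> carrier_mat n k" and B: "B \<in> carrier_mat k n"
    and "eigenvalue (A * B) z" and "z \<noteq> 0"
  shows "eigenvalue (B * A) z"
proof -
  obtain v where v: "v \<in> carrier_vec n" "v \<noteq> 0\<^sub>v n" and ABv: "(A * B) *\<^sub>v v = z \<cdot>\<^sub>v v"
    using assms(3) A unfolding eigenvalue_def eigenvector_def by auto
  define w where "w = B *\<^sub>v v"
  have w: "w \<in> carrier_vec k"
    unfolding w_def using B v(1) by simp
  have Aw: "A *\<^sub>v w = z \<cdot>\<^sub>v v"
    unfolding w_def using ABv A B v(1) by simp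
  have w_nonzero: "w \<noteq> 0\<^sub>v k"
  proof
    assume "w = 0\<^sub>v k"
    then have "A *\<^sub>v w = 0\<^sub>v n"
      using A by (auto intro!: eq_vecI simp: scalar_prod_def)
    then have "z \<cdot>\<^sub>v v = 0\<^sub>v n"
      using Aw by simp
    have "v = 0\<^sub>v n"
    proof (rule eq_vecI)
      fix i
      assume "i < dim_vec (0\<^sub>v n :: 'a vec)"
      then have "z * v $ i = 0"
        using v(1) arg_cong[OF \<open>z \<cdot>\<^sub>v v = 0\<^sub>v n\<close>, of "\<lambda>u. u $ i"] by simp
      then show "v $ i = 0\<^sub>v n $ i"
        using \<open>z \<noteq> 0\<close> \<open>i < dim_vec (0\<^sub>v n)\<close> by simp
    qed (use v(1) in simp)
    with v(2) show False ..
  qed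
  have "(B * A) *\<^sub>v w = B *\<^sub>v (A *\<^sub>v w)"
    using A B w by simp
  also have "\<dots> = z \<cdot>\<^sub>v w"
    unfolding Aw unfolding w_def using B v(1) by (rule mult_mat_vec)
  finally show ?thesis
    unfolding eigenvalue_def eigenvector_def using w w_nonzero A B by auto
qed

definition minors2 :: "real entry_fun \<Rightarrow> real entry_fun \<Rightarrow> real" where
  "minors2 V W = (V 0 0 * W 1 1 + W 0 0 * V 1 1 - V 0 1 * W 1 0 - W 0 1 * V 1 0)
               + (V 0 0 * W 2 2 + W 0 0 * V 2 2 - V 0 2 * W 2 0 - W 0 2 * V 2 0)
               + (V 1 1 * W 2 2 + W 1 1 * V 2 2 - V 1 2 * W 2 1 - W 1 2 * V 2 1)"

definition hurwitz_form :: "real entry_fun \<Rightarrow> real entry_fun \<Rightarrow> real entry_fun \<Rightarrow> real" where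
  "hurwitz_form U V W = tr3 U * minors2 V W + tr3 V * minors2 U W + tr3 W * minors2 U V
     - (row_det3 U V W + row_det3 U W V + row_det3 V U W
        + row_det3 V W U + row_det3 W U V + row_det3 W V U)"

lemma hurwitz_form_diag: "hurwitz_form N N N = 6 * (tr3 N * sigma2 N - row_det3 N N N)"
  unfolding hurwitz_form_def minors2_def sigma2_def by simp

lemma hurwitz_form_swap12: "hurwitz_form U V W = hurwitz_form V U W"
  unfolding hurwitz_form_def minors2_def by (simp add: algebra_simps)

lemma hurwitz_form_swap23: "hurwitz_form U V W = hurwitz_form U W V"
  unfolding hurwitz_form_def minors2_def by (simp add: algebra_simps)

lemma hurwitz_form_sum_args:
  "hurwitz_form (\<lambda>j k. \<Sum>i\<in>I. P i j k) V W = (\<Sum>i\<in>I. hurwitz_form (P i) V W)"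
  "hurwitz_form U (\<lambda>j k. \<Sum>i\<in>I. P i j k) W = (\<Sum>i\<in>I. hurwitz_form U (P i) W)"
  "hurwitz_form U V (\<lambda>j k. \<Sum>i\<in>I. P i j k) = (\<Sum>i\<in>I. hurwitz_form U V (P i))"
  unfolding hurwitz_form_def tr3_def minors2_def row_det3_def
  by (simp_all add: sum_distrib_left sum_distrib_right sum.distrib sum_subtractf algebra_simps)

definition minor_product ::
    "real entry_fun \<Rightarrow> real entry_fun \<Rightarrow> nat \<Rightarrow> nat \<Rightarrow> nat \<Rightarrow> nat \<Rightarrow> real" where
  "minor_product x y a b j k = (y a j * y b k - y a k * y b j) * (x a j * x b k - x a k * x b j)"

lemma hurwitz_form_rank_one_repeated:
  "hurwitz_form (\<lambda>j k. y a j * x a k) (\<lambda>j k. y a j * x a k) (\<lambda>j k. y b j * x b k)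
     = 2 * (\<Sum>j<3. x a j * y a j)
         * (minor_product x y a b 0 1 + minor_product x y a b 0 2 + minor_product x y a b 1 2)"
  unfolding hurwitz_form_def tr3_def minors2_def row_det3_def minor_product_def
  by (simp add: eval_nat_numeral algebra_simps)

lemma hurwitz_form_rank_one:
  fixes x y :: "real entry_fun" and r1 r2 r3 :: nat
  defines "D \<equiv> \<lambda>a b c. \<Sum>j<3. \<Sum>k<3. x a j * y a j * minor_product x y b c j k"
    and "X \<equiv> \<lambda>a b c. x r1 a * x r2 b * x r3 c"
    and "Y \<equiv> \<lambda>a b c. y r1 a * y r2 b * y r3 c"
  shows "hurwitz_form (\<lambda>j k. y r1 j * x r1 k) (\<lambda>j k. y r2 j * x r2 k) (\<lambda>j k. y r3 j * x r3 k)
     = D r1 r2 r3 + D r2 r1 r3 + D r3 r1 r2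
       + (\<Sum>a<3. \<Sum>b<3. \<Sum>c<3.
            if distinct [a, b, c] then (2 * X a b c - X b c a - X c a b) * Y a b c else 0)"
  unfolding hurwitz_form_def tr3_def minors2_def row_det3_def minor_product_def D_def X_def Y_def
  by (simp add: eval_nat_numeral algebra_simps)

lemma hurwitz_form_rank_one_nonneg:
  fixes x y :: "real entry_fun" and r1 r2 r3 :: nat
  defines "X \<equiv> \<lambda>a b c. x r1 a * x r2 b * x r3 c"
    and "Y \<equiv> \<lambda>a b c. y r1 a * y r2 b * y r3 c"
  assumes diag: "\<And>r j. r \<in> {r1, r2, r3} \<Longrightarrow> j < 3 \<Longrightarrow> 0 \<le> x r j * y r j"
    and minors: "\<And>a b j k. a \<in> {r1, r2, r3} \<Longrightarrow> b \<in> {r1, r2, r3} \<Longrightarrow> j < 3 \<Longrightarrow> k < 3 \<Longrightarrow>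
        0 \<le> minor_product x y a b j k"
    and cyclic: "\<And>a b c. a < 3 \<Longrightarrow> b < 3 \<Longrightarrow> c < 3 \<Longrightarrow> distinct [a, b, c] \<Longrightarrow>
        X b c a * Y a b c \<le> X a b c * Y a b c \<and> X c a b * Y a b c \<le> X a b c * Y a b c"
  shows "0 \<le> hurwitz_form (\<lambda>j k. y r1 j * x r1 k) (\<lambda>j k. y r2 j * x r2 k) (\<lambda>j k. y r3 j * x r3 k)"
proof -
  have D: "0 \<le> (\<Sum>j<3. \<Sum>k<3. x a j * y a j * minor_product x y b c j k)"
    if "a \<in> {r1, r2, r3}" "b \<in> {r1, r2, r3}" "c \<in> {r1, r2, r3}" for a b c
    using that by (intro sum_nonneg mult_nonneg_nonneg[OF diag minors]) auto
  have "0 \<le> (if distinct [a, b, c] then (2 * X a b c - X b c a - X c a b) * Y a b c else 0)"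
    if "a < 3" "b < 3" "c < 3" for a b c
    using cyclic[OF that] by (auto simp: algebra_simps)
  then have C: "0 \<le> (\<Sum>a<3. \<Sum>b<3. \<Sum>c<3.
      if distinct [a, b, c] then (2 * X a b c - X b c a - X c a b) * Y a b c else 0)"
    by (intro sum_nonneg) auto
  show ?thesis
    unfolding hurwitz_form_rank_one
    using D[of r1 r2 r3] D[of r2 r1 r3] D[of r3 r1 r2] C[unfolded X_def Y_def]
    by simp
qed

lemma eq_of_abs_eq_sgn:
  fixes p p' q :: real
  assumes "0 < p' * q" "sgn p = sgn p'" "\<bar>p\<bar> = \<bar>q\<bar>"
  shows "p = q"
proof -
  have "sgn p' = sgn q"
    using assms(1) by (auto simp: zero_less_mult_iff)
  then show ?thesis
    using assms(2,3) by (metis sgn_mult_abs)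
qed

lemma e_cycle_4_minor_eq:
  assumes s_cycle_4: "\<And>vs. e_cycle A B vs \<Longrightarrow> length vs = 4 \<Longrightarrow> s_cycle A B vs"
    and "i < dim_row A" "l < dim_row A" "i \<noteq> l" "j < dim_col A" "k < dim_col A" "j \<noteq> k"
    and pos: "0 < B $$ (j, i) * A $$ (l, j) * B $$ (k, l) * A $$ (i, k)"
  shows "A $$ (i, j) * A $$ (l, k) = A $$ (l, j) * A $$ (i, k)"
proof -
  let ?vs = "[SV i, RV j, SV l, RV k]"
  have "dsr_cycle A B ?vs"
    using assms by (auto simp: dsr_cycle_def dsr_step_def dsr_vertex_ok_def All_less_Suc)
  moreover have "cycle_sign A B ?vs = 1"
    using pos
    by (simp add: cycle_sign_def cyc_edge_sign_def dsr_step_sign_def lessThan_nat_numeral flip: sgn_mult)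
  ultimately have "s_cycle A B ?vs"
    by (intro s_cycle_4) (simp_all add: e_cycle_def cycle_parity_def)
  \<comment> \<open>Finite labels on the S-to-R edges mean that these edges are undirected, i.e. sign-compatible.\<close>
  then have sgn_ij: "sgn (A $$ (i, j)) = sgn (B $$ (j, i))"
    and sgn_lk: "sgn (A $$ (l, k)) = sgn (B $$ (k, l))"
    and abs_eq: "\<bar>A $$ (i, j)\<bar> * \<bar>A $$ (l, k)\<bar> = \<bar>A $$ (l, j)\<bar> * \<bar>A $$ (i, k)\<bar>"
    by (auto simp: s_cycle_def cyc_edge_label_def dsr_step_label_def All_less_Suc lessThan_nat_numeral
        split: if_splits)
  show ?thesis
  proof (rule eq_of_abs_eq_sgn)
    show "0 < (B $$ (j, i) * B $$ (k, l)) * (A $$ (l, j) * A $$ (i, k))"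
      using pos by (simp only: ac_simps)
    show "sgn (A $$ (i, j) * A $$ (l, k)) = sgn (B $$ (j, i) * B $$ (k, l))"
      by (simp only: sgn_mult sgn_ij sgn_lk)
    show "\<bar>A $$ (i, j) * A $$ (l, k)\<bar> = \<bar>A $$ (l, j) * A $$ (i, k)\<bar>"
      by (simp only: abs_mult abs_eq)
  qed
qed

lemma o_cycle_6_minor_eq:
  assumes s_cycle_6: "\<And>vs. o_cycle A B vs \<Longrightarrow> length vs = 6 \<Longrightarrow> s_cycle A B vs"
    and "p < dim_row A" "q < dim_row A" "r < dim_row A" "distinct [p, q, r]"
    and "a < dim_col A" "b < dim_col A" "c < dim_col A" "distinct [a, b, c]"
    and pos: "0 < B $$ (a, p) * A $$ (q, a) * B $$ (b, q) * A $$ (r, b) * B $$ (c, r) * A $$ (p, c)"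
  shows "A $$ (p, a) * A $$ (q, b) * A $$ (r, c) = A $$ (q, a) * A $$ (r, b) * A $$ (p, c)"
proof -
  let ?vs = "[SV p, RV a, SV q, RV b, SV r, RV c]"
  have "dsr_cycle A B ?vs"
    using assms by (auto simp: dsr_cycle_def dsr_step_def dsr_vertex_ok_def All_less_Suc)
  moreover have "cycle_sign A B ?vs = 1"
    using pos
    by (simp add: cycle_sign_def cyc_edge_sign_def dsr_step_sign_def lessThan_nat_numeral flip: sgn_mult)
  ultimately have "s_cycle A B ?vs"
    by (intro s_cycle_6) (simp_all add: o_cycle_def cycle_parity_def)
  then have sgn_pa: "sgn (A $$ (p, a)) = sgn (B $$ (a, p))"
    and sgn_qb: "sgn (A $$ (q, b)) = sgn (B $$ (b, q))"
    and sgn_rc: "sgn (A $$ (r, c)) = sgn (B $$ (c, r))"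
    and abs_eq: "\<bar>A $$ (p, a)\<bar> * \<bar>A $$ (q, b)\<bar> * \<bar>A $$ (r, c)\<bar>
                 = \<bar>A $$ (q, a)\<bar> * \<bar>A $$ (r, b)\<bar> * \<bar>A $$ (p, c)\<bar>"
    by (auto simp: s_cycle_def cyc_edge_label_def dsr_step_label_def All_less_Suc lessThan_nat_numeral
        split: if_splits)
  show ?thesis
  proof (rule eq_of_abs_eq_sgn)
    show "0 < (B $$ (a, p) * B $$ (b, q) * B $$ (c, r)) * (A $$ (q, a) * A $$ (r, b) * A $$ (p, c))"
      using pos by (simp only: ac_simps)
    show "sgn (A $$ (p, a) * A $$ (q, b) * A $$ (r, c)) = sgn (B $$ (a, p) * B $$ (b, q) * B $$ (c, r))"
      by (simp only: sgn_mult sgn_pa sgn_qb sgn_rc)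
    show "\<bar>A $$ (p, a) * A $$ (q, b) * A $$ (r, c)\<bar> = \<bar>A $$ (q, a) * A $$ (r, b) * A $$ (p, c)\<bar>"
      by (simp only: abs_mult abs_eq)
  qed
qed

lemma in_Q0_sign_compatible:
  assumes "in_Q0 C A" "in_Q0 C (transpose_mat B)" "i < dim_row C" "j < dim_col C"
  shows "0 \<le> A $$ (i, j) * B $$ (j, i)"
proof -
  have "dim_row B = dim_col C" "dim_col B = dim_row C"
    using assms(2) unfolding in_Q0_def by auto
  then have "A $$ (i, j) = 0 \<or> sgn (A $$ (i, j)) = sgn (C $$ (i, j))"
    and "B $$ (j, i) = 0 \<or> sgn (B $$ (j, i)) = sgn (C $$ (i, j))"
    using assms unfolding in_Q0_def by auto
  then have "0 \<le> sgn (A $$ (i, j)) * sgn (B $$ (j, i))"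
    by auto
  then show ?thesis
    by (simp add: sgn_mult[symmetric])
qed

locale dsr_three_reactions =
  fixes m :: nat and A B :: "real mat"
  assumes A_carrier: "A \<in> carrier_mat m 3" and B_carrier: "B \<in> carrier_mat 3 m"
    and sign_compatible: "\<And>i j. i < m \<Longrightarrow> j < 3 \<Longrightarrow> 0 \<le> A $$ (i, j) * B $$ (j, i)"
    and s_cycle_4: "\<And>vs. e_cycle A B vs \<Longrightarrow> length vs = 4 \<Longrightarrow> s_cycle A B vs"
    and s_cycle_6: "\<And>vs. o_cycle A B vs \<Longrightarrow> length vs = 6 \<Longrightarrow> s_cycle A B vs"
begin

lemma dims [simp]: "dim_row A = m" "dim_col A = 3" "dim_row B = 3" "dim_col B = m"
  using A_carrier B_carrier by auto

lemma minor_product_nonneg: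
  assumes "i < m" "l < m" "j < 3" "k < 3"
  shows "0 \<le> minor_product (\<lambda>i k. A $$ (i, k)) (\<lambda>i j. B $$ (j, i)) i l j k"
proof (cases "i = l \<or> j = k \<or> A $$ (i, j) * A $$ (l, k) = A $$ (l, j) * A $$ (i, k)")
  case True
  then have "A $$ (i, j) * A $$ (l, k) - A $$ (i, k) * A $$ (l, j) = 0"
    by (elim disjE) (simp_all add: mult.commute)
  then show ?thesis
    by (simp add: minor_product_def)
next
  case False
  then have "i \<noteq> l" "j \<noteq> k" and ne: "A $$ (i, j) * A $$ (l, k) \<noteq> A $$ (l, j) * A $$ (i, k)"
    by auto
  \<comment> \<open>The cross terms are the sign products of the two 4-cycles on rows \<open>i, l\<close> and columns
      \<open>j, k\<close>; a positive one would be an e-cycle, hence an s-cycle, forcing the excluded equality.\<close>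
  have "\<not> 0 < B $$ (j, i) * A $$ (l, j) * B $$ (k, l) * A $$ (i, k)"
    using e_cycle_4_minor_eq[OF s_cycle_4 _ _ \<open>i \<noteq> l\<close> _ _ \<open>j \<noteq> k\<close>] ne assms by auto
  moreover have "\<not> 0 < B $$ (j, l) * A $$ (i, j) * B $$ (k, i) * A $$ (l, k)"
    using e_cycle_4_minor_eq[OF s_cycle_4 _ _ \<open>i \<noteq> l\<close>[symmetric] _ _ \<open>j \<noteq> k\<close>] ne assms by auto
  moreover have "minor_product (\<lambda>i k. A $$ (i, k)) (\<lambda>i j. B $$ (j, i)) i l j k
      = (A $$ (i, j) * B $$ (j, i)) * (A $$ (l, k) * B $$ (k, l))
        + (A $$ (i, k) * B $$ (k, i)) * (A $$ (l, j) * B $$ (j, l))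
        - B $$ (j, i) * A $$ (l, j) * B $$ (k, l) * A $$ (i, k)
        - B $$ (j, l) * A $$ (i, j) * B $$ (k, i) * A $$ (l, k)"
    by (simp add: minor_product_def algebra_simps)
  moreover have "0 \<le> (A $$ (i, j) * B $$ (j, i)) * (A $$ (l, k) * B $$ (k, l))"
    "0 \<le> (A $$ (i, k) * B $$ (k, i)) * (A $$ (l, j) * B $$ (j, l))"
    using assms by (simp_all add: sign_compatible)
  ultimately show ?thesis
    by linarith
qed

lemma six_cycle_bound:
  assumes "p < m" "q < m" "r < m" "distinct [p, q, r]"
    and "a < 3" "b < 3" "c < 3" "distinct [a, b, c]"
  shows "A $$ (q, a) * A $$ (r, b) * A $$ (p, c) * (B $$ (a, p) * B $$ (b, q) * B $$ (c, r))
       \<le> A $$ (p, a) * A $$ (q, b) * A $$ (r, c) * (B $$ (a, p) * B $$ (b, q) * B $$ (c, r))"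
proof (cases "0 < A $$ (q, a) * A $$ (r, b) * A $$ (p, c) * (B $$ (a, p) * B $$ (b, q) * B $$ (c, r))")
  case True
  then have "0 < B $$ (a, p) * A $$ (q, a) * B $$ (b, q) * A $$ (r, b) * B $$ (c, r) * A $$ (p, c)"
    by (simp add: ac_simps)
  then have "A $$ (p, a) * A $$ (q, b) * A $$ (r, c) = A $$ (q, a) * A $$ (r, b) * A $$ (p, c)"
    using o_cycle_6_minor_eq[OF s_cycle_6] assms by simp
  then show ?thesis
    by simp
next
  case False
  have "0 \<le> (A $$ (p, a) * B $$ (a, p)) * (A $$ (q, b) * B $$ (b, q)) * (A $$ (r, c) * B $$ (c, r))"
    using assms by (simp add: sign_compatible)
  with False show ?thesis
    by (simp add: ac_simps)
qed

definition BA_term :: "nat \<Rightarrow> real entry_fun" where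
  "BA_term r = (\<lambda>j k. B $$ (j, r) * A $$ (r, k))"

lemma hurwitz_form_BA_term_repeated_nonneg:
  assumes "a < m" "b < m"
  shows "0 \<le> hurwitz_form (BA_term a) (BA_term a) (BA_term b)"
proof -
  let ?minor = "minor_product (\<lambda>i k. A $$ (i, k)) (\<lambda>i j. B $$ (j, i)) a b"
  have "0 \<le> (\<Sum>j<3. A $$ (a, j) * B $$ (j, a))"
    using assms by (intro sum_nonneg sign_compatible) auto
  moreover have "0 \<le> ?minor 0 1 + ?minor 0 2 + ?minor 1 2"
    using assms by (intro add_nonneg_nonneg minor_product_nonneg) auto
  ultimately show ?thesis
    unfolding BA_term_def
    using hurwitz_form_rank_one_repeated[of "\<lambda>i j. B $$ (j, i)" a "\<lambda>i k. A $$ (i, k)" b]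
    by simp
qed

lemma hurwitz_form_BA_term_distinct_nonneg:
  assumes "r1 < m" "r2 < m" "r3 < m" "distinct [r1, r2, r3]"
  shows "0 \<le> hurwitz_form (BA_term r1) (BA_term r2) (BA_term r3)"
  unfolding BA_term_def
proof (rule hurwitz_form_rank_one_nonneg[where x = "\<lambda>i k. A $$ (i, k)" and y = "\<lambda>i j. B $$ (j, i)"])
  show "0 \<le> A $$ (r, j) * B $$ (j, r)" if "r \<in> {r1, r2, r3}" "j < 3" for r j
    using that assms by (auto intro: sign_compatible)
  show "0 \<le> minor_product (\<lambda>i k. A $$ (i, k)) (\<lambda>i j. B $$ (j, i)) a b j k"
    if "a \<in> {r1, r2, r3}" "b \<in> {r1, r2, r3}" "j < 3" "k < 3" for a b j k
    using that assms by (auto intro: minor_product_nonneg)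
  fix a b c :: nat
  assume "a < 3" "b < 3" "c < 3" "distinct [a, b, c]"
  then show "A $$ (r1, b) * A $$ (r2, c) * A $$ (r3, a) * (B $$ (a, r1) * B $$ (b, r2) * B $$ (c, r3))
      \<le> A $$ (r1, a) * A $$ (r2, b) * A $$ (r3, c) * (B $$ (a, r1) * B $$ (b, r2) * B $$ (c, r3)) \<and>
    A $$ (r1, c) * A $$ (r2, a) * A $$ (r3, b) * (B $$ (a, r1) * B $$ (b, r2) * B $$ (c, r3))
      \<le> A $$ (r1, a) * A $$ (r2, b) * A $$ (r3, c) * (B $$ (a, r1) * B $$ (b, r2) * B $$ (c, r3))"
    using six_cycle_bound[of r1 r3 r2 a c b] six_cycle_bound[of r1 r2 r3 a b c] assms
    by (auto simp: ac_simps)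
qed

lemma hurwitz_form_BA_term_nonneg:
  assumes "i < m" "l < m" "p < m"
  shows "0 \<le> hurwitz_form (BA_term i) (BA_term l) (BA_term p)"
proof -
  consider "i = l" | "i = p" | "l = p" | "distinct [i, l, p]"
    by auto
  then show ?thesis
  proof cases
    case 1
    then show ?thesis
      using hurwitz_form_BA_term_repeated_nonneg assms by simp
  next
    case 2
    then show ?thesis
      using hurwitz_form_BA_term_repeated_nonneg[of p l] assms hurwitz_form_swap23 by metis
  next
    case 3
    then show ?thesis
      using hurwitz_form_BA_term_repeated_nonneg[of p i] assms hurwitz_form_swap12 hurwitz_form_swap23
      by metis
  next
    case 4
    then show ?thesis
      using hurwitz_form_BA_term_distinct_nonneg assms by simp
  qed
qed

lemma Re_nonreal_eigenvalue_nonneg: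
  assumes ev: "eigenvalue (map_mat complex_of_real (A * B)) z" and "Im z \<noteq> 0"
  shows "0 \<le> Re z"
proof -
  define N where "N = (\<lambda>j k. \<Sum>i<m. BA_term i j k)"
  have "map_mat complex_of_real (A * B) = map_mat complex_of_real A * map_mat complex_of_real B"
    "map_mat complex_of_real (B * A) = map_mat complex_of_real B * map_mat complex_of_real A"
    using A_carrier B_carrier by (simp_all add: of_real_hom.mat_hom_mult)
  moreover have "z \<noteq> 0"
    using \<open>Im z \<noteq> 0\<close> by auto
  ultimately have "eigenvalue (map_mat complex_of_real (B * A)) z"
    using eigenvalue_mult_swap[of "map_mat complex_of_real A" m 3 "map_mat complex_of_real B"]
      A_carrier B_carrier ev
    by simp
  moreover have "map_mat complex_of_real (B * A) = mat 3 3 (\<lambda>(j, k). complex_of_real (N j k))"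
    by (rule eq_matI) (auto simp: N_def BA_term_def scalar_prod_def atLeast0LessThan)
  ultimately have "z ^ 3 - of_real (tr3 N) * z\<^sup>2 + of_real (sigma2 N) * z - of_real (row_det3 N N N) = 0"
    using eigenvalue_3x3_char_eq[of "\<lambda>j k. complex_of_real (N j k)"]
    by (simp add: tr3_def sigma2_def row_det3_def)
  then have "tr3 N * sigma2 N - row_det3 N N N = 2 * Re z * ((tr3 N - Re z)\<^sup>2 + (Im z)\<^sup>2)"
    using \<open>Im z \<noteq> 0\<close> by (rule cubic_nonreal_root_Re)
  moreover have "0 \<le> hurwitz_form N N N"
    unfolding N_def hurwitz_form_sum_args by (intro sum_nonneg hurwitz_form_BA_term_nonneg) auto
  moreover have "0 < (tr3 N - Re z)\<^sup>2 + (Im z)\<^sup>2"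
    using \<open>Im z \<noteq> 0\<close> by (simp add: add_nonneg_pos)
  ultimately show ?thesis
    unfolding hurwitz_form_diag by (simp add: zero_le_mult_iff)
qed

end

theorem corollary6p1:
  fixes m :: nat and A B C :: "real mat"
  assumes "m \<ge> 1"
    and "C \<in> carrier_mat m 3"
    and "in_Q0 C A"
    and "in_Q0 C (transpose_mat B)"
    and "\<And>vs. e_cycle A B vs \<Longrightarrow> length vs = 4 \<Longrightarrow> s_cycle A B vs"
    and "\<And>vs. o_cycle A B vs \<Longrightarrow> length vs = 6 \<Longrightarrow> s_cycle A B vs"
  shows "\<not> (\<exists>z::complex. eigenvalue (map_mat complex_of_real (A * B)) z \<and>
                  Im z \<noteq> 0 \<and> Re z < 0)"
proof -
  interpret dsr_three_reactions m A B
  proof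
    show "A \<in> carrier_mat m 3" "B \<in> carrier_mat 3 m"
      using assms(2-4) unfolding in_Q0_def by auto
    show "0 \<le> A $$ (i, j) * B $$ (j, i)" if "i < m" "j < 3" for i j
      using in_Q0_sign_compatible[OF assms(3,4)] that assms(2) by auto
  qed (use assms(5,6) in auto)
  show ?thesis
    using Re_nonreal_eigenvalue_nonneg by force
qed

end
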